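(* Let $H=\sum_{i=1}^Nc_iP_i$ be a Pauli Hamiltonian, $|\psi\rangle$ a state, $\mathcal{R}=(G^{[1]},\dots,G^{[m]})$ a repacked grouping and $\mathcal{R}'=(G'^{[1]},\dots,G'^{[m]})$ a refinement of $\mathcal{R}$ such that for some $\ell$, $G'^{[j]}=G^{[j]}$ for $j\neq\ell$ and $G'^{[\ell]}\setminus G^{[\ell]}=\{P_s\}$. Fix positive shot counts $M_1,\dots,M_m$ used for both. Suppose additionally that $\sigma_{P_iP_s}=0$ for all $i\ne s$ with $P_i$ commuting with $P_s$. Then, for the shot-weighted averaging estimators, $\mathrm{Var}(\overline{E}_{\mathcal{R}'})\le\mathrm{Var}(\overline{E}_{\mathcal{R}})$, and $\mathrm{Var}(\overline{E}_{\mathcal{R}'})<\mathrm{Var}(\overline{E}_{\mathcal{R}})$ if and only if $\sigma^2_{P_s}>0$.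
   Context: A Pauli Hamiltonian is $H=\sum_{i=1}^Nc_iP_i$ with real nonzero $c_i$ and distinct $n$-qubit Pauli strings. $\sigma_P^2=1-\langle P\rangle^2$; for commuting $P,Q$, $\sigma_{PQ}=\langle PQ\rangle-\langle P\rangle\langle Q\rangle$. A repacked grouping is a list of $m$ sets of mutually commuting Pauli terms of $H$ covering all terms, possibly overlapping, each containing the corresponding group of an underlying disjoint grouping; a refinement enlarges each set (keeping commutativity). Measurement model: group $j$ is measured in $M_j$ independent shots with simultaneous $\pm1$ outcomes of all its operators; different groups are independent. With $\Gamma_{\mathcal{S}}(i)$ the set of groups of $\mathcal{S}$ containing $P_i$ and $\overline{\langle P_i\rangle}_{(j)}$ the sample mean over group $j$'s shots, the shot-weighted estimator is $\overline{E}_{\mathcal{S}}=\sum_ic_i\sum_{j\in\Gamma_{\mathcal{S}}(i)}\frac{M_j}{\sum_{k\in\Gamma_{\mathcal{S}}(i)}M_k}\overline{\langle P_i\rangle}_{(j)}$. *)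

theory Defs
  imports Complex_Main
begin

datatype pauli = PI | PX | PY | PZ

definition anti1 :: "pauli \<Rightarrow> pauli \<Rightarrow> bool" where
  "anti1 a b \<longleftrightarrow> a \<noteq> PI \<and> b \<noteq> PI \<and> a \<noteq> b"

definition pauli_commute :: "pauli list \<Rightarrow> pauli list \<Rightarrow> bool" where
  "pauli_commute p q \<longleftrightarrow> even (card {k. k < length p \<and> anti1 (p ! k) (q ! k)})"

definition pauli_hamiltonian ::
  "nat \<Rightarrow> nat \<Rightarrow> (nat \<Rightarrow> real) \<Rightarrow> (nat \<Rightarrow> pauli list) \<Rightarrow> bool" where
  "pauli_hamiltonian n N c P \<longleftrightarrow>
     (\<forall>i<N. length (P i) = n \<and> c i \<noteq> 0) \<and> inj_on P {..<N}"

text \<open>A state enters only through the expectation values ev p = <P> and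
  ev2 p q = <PQ> (for commuting p, q).\<close>
definition state_moments ::
  "nat \<Rightarrow> (pauli list \<Rightarrow> real) \<Rightarrow> (pauli list \<Rightarrow> pauli list \<Rightarrow> real) \<Rightarrow> bool" where
  "state_moments n ev ev2 \<longleftrightarrow>
     (\<forall>p. length p = n \<longrightarrow> \<bar>ev p\<bar> \<le> 1) \<and>
     (\<forall>p q. length p = n \<and> length q = n \<and> pauli_commute p q \<longrightarrow> ev2 p q = ev2 q p)"

definition sigma2 :: "(pauli list \<Rightarrow> real) \<Rightarrow> pauli list \<Rightarrow> real" where
  "sigma2 ev p = 1 - (ev p)\<^sup>2"

definition sigma_cov ::
  "(pauli list \<Rightarrow> real) \<Rightarrow> (pauli list \<Rightarrow> pauli list \<Rightarrow> real) \<Rightarrow> pauli list \<Rightarrow> pauli list \<Rightarrow> real" where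
  "sigma_cov ev ev2 p q = ev2 p q - ev p * ev q"

definition term_cov ::
  "(pauli list \<Rightarrow> real) \<Rightarrow> (pauli list \<Rightarrow> pauli list \<Rightarrow> real) \<Rightarrow> (nat \<Rightarrow> pauli list)
   \<Rightarrow> nat \<Rightarrow> nat \<Rightarrow> real" where
  "term_cov ev ev2 P i k = (if i = k then sigma2 ev (P i) else sigma_cov ev ev2 (P i) (P k))"

definition commuting_set :: "(nat \<Rightarrow> pauli list) \<Rightarrow> nat set \<Rightarrow> bool" where
  "commuting_set P A \<longleftrightarrow> (\<forall>i\<in>A. \<forall>k\<in>A. pauli_commute (P i) (P k))"

definition disjoint_grouping ::
  "nat \<Rightarrow> nat \<Rightarrow> (nat \<Rightarrow> pauli list) \<Rightarrow> (nat \<Rightarrow> nat set) \<Rightarrow> bool" where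
  "disjoint_grouping N m P D \<longleftrightarrow>
     (\<forall>j<m. D j \<subseteq> {..<N} \<and> commuting_set P (D j)) \<and>
     (\<forall>j<m. \<forall>j'<m. j \<noteq> j' \<longrightarrow> D j \<inter> D j' = {}) \<and>
     (\<Union>j<m. D j) = {..<N}"

definition repacked_grouping ::
  "nat \<Rightarrow> nat \<Rightarrow> (nat \<Rightarrow> pauli list) \<Rightarrow> (nat \<Rightarrow> nat set) \<Rightarrow> bool" where
  "repacked_grouping N m P G \<longleftrightarrow>
     (\<forall>j<m. G j \<subseteq> {..<N} \<and> commuting_set P (G j)) \<and>
     (\<Union>j<m. G j) = {..<N} \<and>
     (\<exists>D. disjoint_grouping N m P D \<and> (\<forall>j<m. D j \<subseteq> G j))"

definition refinement ::
  "nat \<Rightarrow> nat \<Rightarrow> (nat \<Rightarrow> pauli list) \<Rightarrow> (nat \<Rightarrow> nat set) \<Rightarrow> (nat \<Rightarrow> nat set) \<Rightarrow> bool" where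
  "refinement N m P G G' \<longleftrightarrow>
     repacked_grouping N m P G \<and>
     (\<forall>j<m. G j \<subseteq> G' j \<and> G' j \<subseteq> {..<N} \<and> commuting_set P (G' j))"

definition Gamma :: "nat \<Rightarrow> (nat \<Rightarrow> nat set) \<Rightarrow> nat \<Rightarrow> nat set" where
  "Gamma m S i = {j. j < m \<and> i \<in> S j}"

definition shot_weight :: "(nat \<Rightarrow> nat) \<Rightarrow> nat \<Rightarrow> (nat \<Rightarrow> nat set) \<Rightarrow> nat \<Rightarrow> nat \<Rightarrow> real" where
  "shot_weight M m S i j = real (M j) / (\<Sum>k\<in>Gamma m S i. real (M k))"

text \<open>The estimator is E = sum_j sum_{i in S_j} c_i w_{ij} mean_j(P_i), where mean_j is the
  average over the M_j independent shots of group j, groups independent.  Hence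
  Var(E) = sum_j (1/M_j) Var_single_shot(sum_{i in S_j} c_i w_{ij} P_i)
         = sum_j (1/M_j) sum_{i,k in S_j} c_i c_k w_{ij} w_{kj} sigma_{P_i P_k}.\<close>
definition estimator_variance ::
  "(nat \<Rightarrow> real) \<Rightarrow> (nat \<Rightarrow> pauli list) \<Rightarrow> (pauli list \<Rightarrow> real) \<Rightarrow> (pauli list \<Rightarrow> pauli list \<Rightarrow> real)
   \<Rightarrow> (nat \<Rightarrow> nat) \<Rightarrow> nat \<Rightarrow> (nat \<Rightarrow> nat set) \<Rightarrow> real" where
  "estimator_variance c P ev ev2 M m S =
     (\<Sum>j<m. (1 / real (M j)) *
        (\<Sum>i\<in>S j. \<Sum>k\<in>S j. c i * c k * shot_weight M m S i j * shot_weight M m S k j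
                              * term_cov ev ev2 P i k))"

end

theory Submission
  imports Defs
begin

text \<open>Once the covariances of \<open>P\<^sub>s\<close> with all other terms vanish, the variance splits
  into a part not involving \<open>P\<^sub>s\<close> and the contribution of \<open>P\<^sub>s\<close> alone.  With shot-weighted
  averaging the latter is \<open>c\<^sub>s\<^sup>2 \<sigma>\<^sup>2(P\<^sub>s) / T\<close>, where \<open>T\<close> is the total number of shots of
  the groups containing \<open>P\<^sub>s\<close>.  Adding \<open>P\<^sub>s\<close> to group \<open>\<ell>\<close> leaves the weights of all other
  terms, and hence the first part, unchanged, while it raises \<open>T\<close> by \<open>M\<^sub>\<ell> > 0\<close>.\<close>

lemma sum_sum_remove_uncoupled:
  fixes f :: "'a \<Rightarrow> 'a \<Rightarrow> 'b::comm_monoid_add"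
  assumes "finite X"
    and "\<And>i. s \<in> X \<Longrightarrow> i \<in> X \<Longrightarrow> i \<noteq> s \<Longrightarrow> f i s = 0"
    and "\<And>k. s \<in> X \<Longrightarrow> k \<in> X \<Longrightarrow> k \<noteq> s \<Longrightarrow> f s k = 0"
  shows "(\<Sum>i\<in>X. \<Sum>k\<in>X. f i k) = (\<Sum>i\<in>X-{s}. \<Sum>k\<in>X-{s}. f i k) + (if s \<in> X then f s s else 0)"
proof (cases "s \<in> X")
  case True
  define Y where "Y = X - {s}"
  have "X = insert s Y" "s \<notin> Y" "finite Y"
    using True assms(1) by (auto simp: Y_def)
  moreover have "(\<Sum>k\<in>Y. f s k) = 0" "(\<Sum>i\<in>Y. f i s) = 0"
    using True assms(2,3) by (auto simp: Y_def)
  ultimately show ?thesis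
    using True by (simp add: sum.distrib Y_def[symmetric] add.commute)
qed simp

lemma sigma_cov_commute:
  assumes "state_moments n ev ev2" "length p = n" "length q = n" "pauli_commute p q"
  shows "sigma_cov ev ev2 q p = sigma_cov ev ev2 p q"
proof -
  have "ev2 p q = ev2 q p" using assms unfolding state_moments_def by blast
  then show ?thesis by (simp add: sigma_cov_def mult.commute)
qed

lemma sigma2_nonneg:
  assumes "state_moments n ev ev2" "length p = n"
  shows "sigma2 ev p \<ge> 0"
proof -
  have "\<bar>ev p\<bar> \<le> 1" using assms by (simp add: state_moments_def)
  then show ?thesis by (simp add: sigma2_def abs_square_le_1)
qed

lemma sum_shot_weight_squared:
  "(\<Sum>j<m. 1 / real (M j) * (if s \<in> S j then a * shot_weight M m S s j * shot_weight M m S s j else 0))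
     = a / (\<Sum>k\<in>Gamma m S s. real (M k))"
proof -
  define T where "T = (\<Sum>k\<in>Gamma m S s. real (M k))"
  have "(\<Sum>j<m. 1 / real (M j) * (if s \<in> S j then a * shot_weight M m S s j * shot_weight M m S s j else 0))
      = (\<Sum>j<m. if s \<in> S j then a / T\<^sup>2 * real (M j) else 0)"
    by (intro sum.cong) (auto simp: shot_weight_def T_def power2_eq_square)
  also have "\<dots> = (\<Sum>j\<in>Gamma m S s. a / T\<^sup>2 * real (M j))"
    by (simp add: sum.If_cases Gamma_def Int_def)
  also have "\<dots> = a / T\<^sup>2 * T"
    by (simp add: sum_distrib_left T_def)
  also have "\<dots> = a / T"
    by (simp add: power2_eq_square)
  finally show ?thesis by (simp add: T_def)
qed

definition variance_without_term ::
  "(nat \<Rightarrow> real) \<Rightarrow> (nat \<Rightarrow> pauli list) \<Rightarrow> (pauli list \<Rightarrow> real) \<Rightarrow> (pauli list \<Rightarrow> pauli list \<Rightarrow> real)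
   \<Rightarrow> (nat \<Rightarrow> nat) \<Rightarrow> nat \<Rightarrow> (nat \<Rightarrow> nat set) \<Rightarrow> nat \<Rightarrow> real" where
  "variance_without_term c P ev ev2 M m S s =
     (\<Sum>j<m. (1 / real (M j)) *
        (\<Sum>i\<in>S j - {s}. \<Sum>k\<in>S j - {s}. c i * c k * shot_weight M m S i j * shot_weight M m S k j
                                        * term_cov ev ev2 P i k))"

lemma estimator_variance_split_off_uncorrelated:
  assumes ham: "pauli_hamiltonian n N c P"
    and st: "state_moments n ev ev2"
    and S: "\<forall>j<m. S j \<subseteq> {..<N} \<and> commuting_set P (S j)"
    and "s < N"
    and uncorr: "\<forall>i<N. i \<noteq> s \<and> pauli_commute (P i) (P s) \<longrightarrow> sigma_cov ev ev2 (P i) (P s) = 0"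
  shows "estimator_variance c P ev ev2 M m S
           = variance_without_term c P ev ev2 M m S s
             + c s * c s * sigma2 ev (P s) / (\<Sum>k\<in>Gamma m S s. real (M k))"
proof -
  let ?f = "\<lambda>j i k. c i * c k * shot_weight M m S i j * shot_weight M m S k j * term_cov ev ev2 P i k"
  have split: "(\<Sum>i\<in>S j. \<Sum>k\<in>S j. ?f j i k) = (\<Sum>i\<in>S j - {s}. \<Sum>k\<in>S j - {s}. ?f j i k)
      + (if s \<in> S j then c s * c s * sigma2 ev (P s) * shot_weight M m S s j * shot_weight M m S s j else 0)"
    if "j < m" for j
  proof -
    have cov_zero: "sigma_cov ev ev2 (P i) (P s) = 0" "sigma_cov ev ev2 (P s) (P i) = 0"
      if "s \<in> S j" "i \<in> S j" "i \<noteq> s" for i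
    proof -
      have "i < N" "pauli_commute (P i) (P s)"
        using S \<open>j < m\<close> that unfolding commuting_set_def by auto
      moreover have "length (P i) = n" "length (P s) = n"
        using ham \<open>i < N\<close> \<open>s < N\<close> by (auto simp: pauli_hamiltonian_def)
      ultimately show "sigma_cov ev ev2 (P i) (P s) = 0" "sigma_cov ev ev2 (P s) (P i) = 0"
        using uncorr that(3) sigma_cov_commute[OF st] by auto
    qed
    have "finite (S j)" using S \<open>j < m\<close> finite_subset by blast
    then show ?thesis
      by (subst sum_sum_remove_uncoupled[where s = s]) (auto simp: term_cov_def cov_zero)
  qed
  show ?thesis
    unfolding estimator_variance_def variance_without_term_def
      sum_shot_weight_squared[symmetric, where m = m and M = M and S = S and s = s]
    by (simp add: split distrib_left sum.distrib)
qed

lemma variance_without_term_insert: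
  assumes "\<forall>j<m. j \<noteq> l \<longrightarrow> G' j = G j" and "G' l = insert s (G l)"
  shows "variance_without_term c P ev ev2 M m G' s = variance_without_term c P ev ev2 M m G s"
proof -
  have groups: "G' j - {s} = G j - {s}" if "j < m" for j
    using assms that by (cases "j = l") auto
  have "Gamma m G' i = Gamma m G i" if "i \<noteq> s" for i
    using groups that by (auto simp: Gamma_def)
  then have "shot_weight M m G' i j = shot_weight M m G i j" if "i \<in> G j - {s}" for i j
    using that by (simp add: shot_weight_def)
  then show ?thesis
    unfolding variance_without_term_def by (intro sum.cong) (simp_all add: groups)
qed

lemma sum_shots_Gamma_insert:
  assumes "l < m" "\<forall>j<m. j \<noteq> l \<longrightarrow> G' j = G j" "G' l = insert s (G l)" "s \<notin> G l"
  shows "(\<Sum>k\<in>Gamma m G' s. real (M k)) = (\<Sum>k\<in>Gamma m G s. real (M k)) + real (M l)"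
proof -
  have "Gamma m G' s = insert l (Gamma m G s)" "l \<notin> Gamma m G s"
    using assms by (auto simp: Gamma_def)
  then show ?thesis by (simp add: Gamma_def)
qed

lemma sum_shots_Gamma_pos:
  assumes "j < m" "s \<in> S j" "\<forall>j<m. M j > 0"
  shows "(\<Sum>k\<in>Gamma m S s. real (M k)) > 0"
proof -
  have "j \<in> Gamma m S s" using assms by (simp add: Gamma_def)
  then have "real (M j) \<le> (\<Sum>k\<in>Gamma m S s. real (M k))"
    by (intro member_le_sum) (simp_all add: Gamma_def)
  moreover have "real (M j) > 0" using assms by simp
  ultimately show ?thesis by linarith
qed

lemma divide_add_denominator_le:
  fixes a T d :: real
  assumes "0 \<le> a" "0 < T" "0 < d"
  shows "a / (T + d) \<le> a / T" and "a / (T + d) < a / T \<longleftrightarrow> 0 < a"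
proof -
  show "a / (T + d) \<le> a / T"
    using assms by (intro divide_left_mono) auto
  show "a / (T + d) < a / T \<longleftrightarrow> 0 < a"
    using assms by (cases "a = 0") (auto intro: divide_strict_left_mono)
qed

theorem corollary1:
  fixes n N m l s :: nat
    and c :: "nat \<Rightarrow> real" and P :: "nat \<Rightarrow> pauli list"
    and ev :: "pauli list \<Rightarrow> real" and ev2 :: "pauli list \<Rightarrow> pauli list \<Rightarrow> real"
    and G G' :: "nat \<Rightarrow> nat set" and M :: "nat \<Rightarrow> nat"
  assumes ham: "pauli_hamiltonian n N c P"
    and st: "state_moments n ev ev2"
    and rep: "repacked_grouping N m P G"
    and ref: "refinement N m P G G'"
    and l: "l < m"
    and same: "\<forall>j<m. j \<noteq> l \<longrightarrow> G' j = G j"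
    and new: "G' l - G l = {s}"
    and shots: "\<forall>j<m. M j > 0"
    and uncorr: "\<forall>i<N. i \<noteq> s \<and> pauli_commute (P i) (P s) \<longrightarrow> sigma_cov ev ev2 (P i) (P s) = 0"
  shows "estimator_variance c P ev ev2 M m G' \<le> estimator_variance c P ev ev2 M m G
       \<and> (estimator_variance c P ev ev2 M m G' < estimator_variance c P ev ev2 M m G
            \<longleftrightarrow> sigma2 ev (P s) > 0)"
proof -
  have G: "\<forall>j<m. G j \<subseteq> {..<N} \<and> commuting_set P (G j)" and cover: "(\<Union>j<m. G j) = {..<N}"
    using rep by (auto simp: repacked_grouping_def)
  have G': "\<forall>j<m. G' j \<subseteq> {..<N} \<and> commuting_set P (G' j)" and "G l \<subseteq> G' l"
    using ref l by (auto simp: refinement_def)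
  with new l have "s < N" "s \<notin> G l" "G' l = insert s (G l)" by auto
  then obtain j where "j < m" "s \<in> G j" using cover by auto
  define T where "T = (\<Sum>k\<in>Gamma m G s. real (M k))"
  define a where "a = c s * c s * sigma2 ev (P s)"
  have "T > 0" unfolding T_def using \<open>j < m\<close> \<open>s \<in> G j\<close> shots by (rule sum_shots_Gamma_pos)
  have "a \<ge> 0" "a > 0 \<longleftrightarrow> sigma2 ev (P s) > 0"
    using ham \<open>s < N\<close> sigma2_nonneg[OF st]
    by (auto simp: a_def pauli_hamiltonian_def zero_less_mult_iff)
  moreover have "estimator_variance c P ev ev2 M m G = variance_without_term c P ev ev2 M m G s + a / T"
    using estimator_variance_split_off_uncorrelated[OF ham st G \<open>s < N\<close> uncorr]
    by (simp add: a_def T_def)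
  moreover have "estimator_variance c P ev ev2 M m G'
      = variance_without_term c P ev ev2 M m G s + a / (T + real (M l))"
    using estimator_variance_split_off_uncorrelated[OF ham st G' \<open>s < N\<close> uncorr]
      variance_without_term_insert[OF same \<open>G' l = insert s (G l)\<close>]
      sum_shots_Gamma_insert[OF l same \<open>G' l = insert s (G l)\<close> \<open>s \<notin> G l\<close>]
    by (simp add: a_def T_def)
  ultimately show ?thesis
    using divide_add_denominator_le[OF \<open>a \<ge> 0\<close> \<open>T > 0\<close>] shots l by simp
qed

end
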